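(* Let $a_0<a_1<\dots<a_n$ be positive integers with $\gcd(a_0,\dots,a_n)=1$ and let $t\in\mathbb{Z}_{\ge0}$. If the equation $a_0x_0+\dots+a_nx_n=t$ has a solution $x\in\mathbb{Z}_{\ge 0}^{n+1}$, then it has a solution $x\in\mathbb{Z}_{\ge0}^{n+1}$ whose support $\mathrm{supp}(x)=\{i: x_i\neq 0\}$ satisfies $|\mathrm{supp}(x)|\le \log_2(a_0)+1$. *)

theory Defs
  imports Complex_Main
begin

end

theory Submission
  imports Defs
begin

(* Write S for the support of a solution x outside index 0. If 2^|S| > a_0, two distinct subsets
   of S have subset sums congruent mod a_0; discarding their common part gives disjoint nonempty
   A and B with sum a A = sum a B + m a_0. Subtracting c = min x on A from the coordinates in A and
   adding it to those in B and c m to x_0 keeps the value t, and either increases x_0 (m > 0) or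
   kills a coordinate of A without creating new ones (m = 0). Hence a solution with maximal x_0,
   and least support among those, has |S| <= log_2 a_0. *)

definition support_on :: "'a set \<Rightarrow> ('a \<Rightarrow> 'b::zero) \<Rightarrow> 'a set" where
  "support_on I x = {i \<in> I. x i \<noteq> 0}"

lemma sum_mult_add_indicator:
  fixes a x :: "'a \<Rightarrow> 'b::comm_semiring_1"
  assumes "finite I" "A \<subseteq> I"
  shows "(\<Sum>i\<in>I. a i * (x i + c * of_bool (i \<in> A))) = (\<Sum>i\<in>I. a i * x i) + c * sum a A"
proof -
  have "(\<Sum>i\<in>I. a i * (c * of_bool (i \<in> A))) = (\<Sum>i\<in>I. (c * a i) * of_bool (i \<in> A))"
    by (simp add: ac_simps)
  also have "\<dots> = c * sum a A"
    using assms by (simp add: sum_distrib_left Int_absorb1)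
  finally show ?thesis
    by (simp add: distrib_left sum.distrib)
qed

lemma disjoint_subsets_with_congruent_sums:
  fixes w :: "'a \<Rightarrow> nat"
  assumes "finite S" "0 < q" "q < 2 ^ card S" and pos: "\<forall>i\<in>S. 0 < w i"
  obtains A B m where "A \<subseteq> S" "B \<subseteq> S" "A \<inter> B = {}" "A \<noteq> {}"
    "sum w A = sum w B + m * q"
proof -
  let ?res = "\<lambda>T. sum w T mod q"
  have "\<not> inj_on ?res (Pow S)"
  proof
    assume "inj_on ?res (Pow S)"
    then have "2 ^ card S = card (?res ` Pow S)"
      using \<open>finite S\<close> by (simp add: card_image card_Pow)
    also have "\<dots> \<le> card {..<q}"
      using \<open>0 < q\<close> by (intro card_mono) auto
    finally show False
      using \<open>q < 2 ^ card S\<close> by simp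
  qed
  then obtain T U where TU: "T \<subseteq> S" "U \<subseteq> S" "T \<noteq> U" "?res T = ?res U"
    unfolding inj_on_def by auto
  have fin: "finite T" "finite U"
    using TU \<open>finite S\<close> finite_subset by auto
  have "sum w T = sum w (T - U) + sum w (T \<inter> U)" "sum w U = sum w (U - T) + sum w (T \<inter> U)"
    using sum.Int_Diff[OF fin(1), of w U] sum.Int_Diff[OF fin(2), of w T]
    by (simp_all add: Int_commute)
  with TU(4) have cong: "sum w (T - U) mod q = sum w (U - T) mod q"
    by (simp add: nat_mod_eq_iff)
  have positive_sum: "0 < sum w C" if "C \<subseteq> S" "C \<noteq> {}" for C
    using that pos \<open>finite S\<close> by (meson finite_subset subset_iff sum_pos)
  obtain A B where AB: "(A, B) = (T - U, U - T) \<or> (A, B) = (U - T, T - U)"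
    and le: "sum w B \<le> sum w A"
    using nat_le_linear by metis
  have sub: "A \<subseteq> S" "B \<subseteq> S" "A \<inter> B = {}"
    using AB TU(1,2) by auto
  have "A \<noteq> {}"
  proof
    assume "A = {}"
    then have "B = {}"
      using le sub(2) positive_sum by (metis le_zero_eq not_less sum.empty)
    with \<open>A = {}\<close> AB TU(3) show False
      by auto
  qed
  have "sum w A mod q = sum w B mod q"
    using AB cong by auto
  then have "q dvd sum w A - sum w B"
    using le by (simp add: mod_eq_dvd_iff_nat)
  then obtain m where "sum w A = sum w B + m * q"
    using le by (metis add_diff_inverse_nat dvd_def mult.commute not_le)
  with sub \<open>A \<noteq> {}\<close> show ?thesis
    using that by blast
qed

lemma rebalance_weighted_sum:
  fixes a x :: "'a \<Rightarrow> nat"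
  assumes "finite I" "k \<in> I" "A \<subseteq> I - {k}" "B \<subseteq> I - {k}" "A \<inter> B = {}" "A \<noteq> {}"
    and supp: "\<forall>i\<in>A \<union> B. x i \<noteq> 0"
    and exch: "sum a A = sum a B + m * a k"
  obtains y c j where "(\<Sum>i\<in>I. a i * y i) = (\<Sum>i\<in>I. a i * x i)" "y k = x k + c * m" "0 < c"
    "j \<in> A" "y j = 0" "\<And>i. i \<noteq> k \<Longrightarrow> y i \<noteq> 0 \<Longrightarrow> x i \<noteq> 0"
proof -
  have "finite A"
    using assms(1,3) finite_subset by blast
  define c where "c = Min (x ` A)"
  have "c \<in> x ` A"
    unfolding c_def using \<open>finite A\<close> \<open>A \<noteq> {}\<close> by (intro Min_in) auto
  then obtain j where j: "j \<in> A" "x j = c"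
    by auto
  have c_le: "c \<le> x i" if "i \<in> A" for i
    unfolding c_def using \<open>finite A\<close> that by simp
  define z where "z i = x i - c * of_bool (i \<in> A)" for i
  define y where "y i = z i + c * of_bool (i \<in> B) + c * m * of_bool (i \<in> {k})" for i
  have x_eq: "x i = z i + c * of_bool (i \<in> A)" for i
    using c_le unfolding z_def by auto
  have "(\<Sum>i\<in>I. a i * x i) = (\<Sum>i\<in>I. a i * z i) + c * sum a A"
    unfolding x_eq using assms(1,3) by (subst sum_mult_add_indicator) auto
  also have "\<dots> = (\<Sum>i\<in>I. a i * z i) + c * sum a B + c * m * a k"
    by (simp add: exch algebra_simps)
  also have "\<dots> = (\<Sum>i\<in>I. a i * y i)"
    unfolding y_def using assms(1,2,4)
    by (subst sum_mult_add_indicator[of I "{k}"], simp_all, subst sum_mult_add_indicator) auto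
  finally have "(\<Sum>i\<in>I. a i * y i) = (\<Sum>i\<in>I. a i * x i)" ..
  moreover have "y k = x k + c * m"
    using assms(3,4) unfolding y_def z_def by auto
  moreover have "0 < c" "y j = 0"
    using j supp assms(3,5) unfolding y_def z_def by auto
  moreover have "x i \<noteq> 0" if "i \<noteq> k" "y i \<noteq> 0" for i
    using that supp unfolding y_def z_def by (auto split: if_splits)
  ultimately show ?thesis
    using that j(1) by blast
qed

lemma raise_or_shrink_representation:
  fixes a x :: "'a \<Rightarrow> nat"
  assumes "finite I" "k \<in> I" and pos: "\<forall>i\<in>I. 0 < a i"
    and dense: "a k < 2 ^ card (support_on (I - {k}) x)"
  obtains y where "(\<Sum>i\<in>I. a i * y i) = (\<Sum>i\<in>I. a i * x i)"
    "x k < y k \<or> (y k = x k \<and> support_on I y \<subset> support_on I x)"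
proof -
  obtain A B m where AB: "A \<subseteq> support_on (I - {k}) x" "B \<subseteq> support_on (I - {k}) x"
    "A \<inter> B = {}" "A \<noteq> {}" "sum a A = sum a B + m * a k"
    using disjoint_subsets_with_congruent_sums[where w = a, OF _ _ dense] pos assms(1,2)
    by (auto simp: support_on_def)
  then have "A \<subseteq> I - {k}" "B \<subseteq> I - {k}" "\<forall>i\<in>A \<union> B. x i \<noteq> 0"
    by (auto simp: support_on_def)
  then obtain y c j where y: "(\<Sum>i\<in>I. a i * y i) = (\<Sum>i\<in>I. a i * x i)" "y k = x k + c * m"
    "0 < c" "j \<in> A" "y j = 0" "\<And>i. i \<noteq> k \<Longrightarrow> y i \<noteq> 0 \<Longrightarrow> x i \<noteq> 0"
    using rebalance_weighted_sum[OF assms(1,2) _ _ AB(3,4) _ AB(5)] by blast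
  show ?thesis
  proof (cases "m = 0")
    case True
    have "support_on I y \<subseteq> support_on I x"
    proof
      fix i
      assume "i \<in> support_on I y"
      then show "i \<in> support_on I x"
        using y(2,6) True by (cases "i = k") (auto simp: support_on_def)
    qed
    moreover have "j \<in> support_on I x - support_on I y"
      using y(4,5) AB(1) by (auto simp: support_on_def)
    ultimately have "support_on I y \<subset> support_on I x"
      by blast
    then show ?thesis
      using that[of y] y(1,2) True by simp
  next
    case False
    then show ?thesis
      using that[of y] y(1,2,3) by simp
  qed
qed

lemma exists_sparse_representation:
  fixes a x :: "'a \<Rightarrow> nat"
  assumes "finite I" "k \<in> I" and pos: "\<forall>i\<in>I. 0 < a i"
  obtains y where "(\<Sum>i\<in>I. a i * y i) = (\<Sum>i\<in>I. a i * x i)"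
    "2 ^ card (support_on (I - {k}) y) \<le> a k"
proof -
  define t where "t = (\<Sum>i\<in>I. a i * x i)"
  define sols where "sols = {y. (\<Sum>i\<in>I. a i * y i) = t}"
  have "y k \<le> t" if "y \<in> sols" for y
  proof -
    have "y k \<le> a k * y k"
      using pos \<open>k \<in> I\<close> by (simp add: Suc_leI)
    also have "\<dots> \<le> t"
      using that member_le_sum[of k I "\<lambda>i. a i * y i"] assms(1,2) unfolding sols_def by simp
    finally show ?thesis .
  qed
  then have fin: "finite ((\<lambda>y. y k) ` sols)"
    using finite_subset[of "(\<lambda>y. y k) ` sols" "{..t}"] by auto
  define M where "M = Max ((\<lambda>y. y k) ` sols)"
  have M_max: "y k \<le> M" if "y \<in> sols" for y
    unfolding M_def using fin that by simp
  have "x \<in> sols"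
    unfolding sols_def t_def by simp
  then have "M \<in> (\<lambda>y. y k) ` sols"
    unfolding M_def using fin by (intro Max_in) auto
  then obtain y\<^sub>0 where "y\<^sub>0 \<in> sols \<and> y\<^sub>0 k = M"
    by auto
  then obtain z where z: "z \<in> sols" "z k = M"
    and z_min: "\<And>y. y \<in> sols \<Longrightarrow> y k = M \<Longrightarrow> card (support_on I z) \<le> card (support_on I y)"
    using ex_has_least_nat[of "\<lambda>y. y \<in> sols \<and> y k = M" y\<^sub>0 "\<lambda>y. card (support_on I y)"]
    by blast
  have "2 ^ card (support_on (I - {k}) z) \<le> a k"
  proof (rule ccontr)
    assume "\<not> ?thesis"
    then obtain y where y: "y \<in> sols"
      and raise_or_shrink: "z k < y k \<or> (y k = z k \<and> support_on I y \<subset> support_on I z)"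
      using raise_or_shrink_representation[OF assms, of z] z(1) unfolding sols_def by auto
    show False
    proof (cases "z k < y k")
      case True
      with M_max[OF y] z(2) show False
        by simp
    next
      case False
      have "finite (support_on I z)"
        using \<open>finite I\<close> by (simp add: support_on_def)
      with False raise_or_shrink have "y k = M" "card (support_on I y) < card (support_on I z)"
        using z(2) by (auto intro: psubset_card_mono)
      with z_min[OF y] show False
        by simp
    qed
  qed
  with z(1) that show ?thesis
    unfolding sols_def t_def by blast
qed

theorem corollary1:
  fixes a :: "nat \<Rightarrow> nat" and n t :: nat
  assumes pos: "\<And>i. i \<le> n \<Longrightarrow> a i > 0"
    and incr: "\<And>i j. i < j \<Longrightarrow> j \<le> n \<Longrightarrow> a i < a j"
    and coprime: "Gcd (a ` {0..n}) = 1"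
    and solvable: "\<exists>x :: nat \<Rightarrow> nat. (\<Sum>i=0..n. a i * x i) = t"
  shows "\<exists>x :: nat \<Rightarrow> nat. (\<Sum>i=0..n. a i * x i) = t \<and>
           real (card {i \<in> {0..n}. x i \<noteq> 0}) \<le> log 2 (real (a 0)) + 1"
proof -
  obtain x where "(\<Sum>i=0..n. a i * x i) = t"
    using solvable by blast
  then obtain y where y: "(\<Sum>i=0..n. a i * y i) = t"
    and sparse: "2 ^ card (support_on ({0..n} - {0}) y) \<le> a 0"
    using exists_sparse_representation[of "{0..n}" 0 a x] pos by auto
  have fin: "finite (support_on ({0..n} - {0}) y)"
    by (simp add: support_on_def)
  have "card (support_on {0..n} y) \<le> card (insert 0 (support_on ({0..n} - {0}) y))"
    using fin by (intro card_mono) (auto simp: support_on_def)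
  also have "\<dots> \<le> card (support_on ({0..n} - {0}) y) + 1"
    using fin by (simp add: card_insert_if)
  finally have "card (support_on {0..n} y) \<le> card (support_on ({0..n} - {0}) y) + 1" .
  moreover have "real (card (support_on ({0..n} - {0}) y)) \<le> log 2 (a 0)"
    using sparse by (rule le_log2_of_power)
  ultimately show ?thesis
    using y unfolding support_on_def by fastforce
qed

end
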